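(* Let $(\gamma_{n})_{n\in\mathbb{N}}$ be nonnegative integrable functions on $[0,\infty)$ with $\rho:=\sup_{n\in\mathbb{N}}\int_{0}^{\infty}\gamma_{n}(t)dt<1$, and let $a(t)>0$ satisfy $a(t)/t\to0$ as $t\to\infty$. For $M\in\mathbb{N}$, $\theta\in\mathbb{R}$ and $t\ge0$ define $G_{M}(t,\theta,M)=\theta$ and recursively, for $0\le n\le M-1$, $$G_{n}(t,\theta,M)=\theta+\int_{0}^{t}\left(e^{G_{n+1}(t-s,\theta,M)}-1\right)\gamma_{n}(s)\,ds.$$ Then for any fixed $\theta\in\mathbb{R}$ there is some $k_{1}\ge\frac{1}{1-\rho}$ such that for all sufficiently large $t$, $$\left|G_{n}\left(s,\tfrac{a(t)}{t}\theta,M\right)\right|\le k_{1}\frac{a(t)}{t}|\theta|$$ uniformly for $1\le n\le M$, $M\in\mathbb{N}$ and $s\ge0$. *)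

theory Defs
  imports "HOL-Analysis.Analysis"
begin

text \<open>Grec gamma M k t theta is G_{M-k}(t,theta,M): recursion on the distance k = M - n.\<close>
fun Grec :: "(nat \<Rightarrow> real \<Rightarrow> real) \<Rightarrow> nat \<Rightarrow> nat \<Rightarrow> real \<Rightarrow> real \<Rightarrow> real" where
  "Grec \<gamma> M 0 t \<theta> = \<theta>"
| "Grec \<gamma> M (Suc k) t \<theta> =
     \<theta> + (LINT s:{0..t}|lborel. (exp (Grec \<gamma> M k (t - s) \<theta>) - 1) * \<gamma> (M - Suc k) s)"

text \<open>G gamma n t theta M = G_n(t, theta, M), meaningful for n \<le> M.\<close>
definition G :: "(nat \<Rightarrow> real \<Rightarrow> real) \<Rightarrow> nat \<Rightarrow> real \<Rightarrow> real \<Rightarrow> nat \<Rightarrow> real" where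
  "G \<gamma> n t \<theta> M = Grec \<gamma> M (M - n) t \<theta>"

end

theory Submission
  imports Defs
begin

text \<open>
  If \<open>|g| \<le> B\<close> on \<open>[0, t]\<close>, then \<open>\<theta> + \<integral>\<^sub>0\<^sup>t (exp (g (t - s)) - 1) \<gamma> s ds\<close> is bounded by
  \<open>|\<theta>| + (exp B - 1) \<rho>\<close>. Hence any \<open>B\<close> with \<open>|\<theta>| + (exp B - 1) \<rho> \<le> B\<close> bounds every \<open>G\<^sub>n\<close>,
  by induction on \<open>M - n\<close>. Since \<open>exp B - 1 \<le> B exp B\<close>, the choice \<open>B = 2 |\<theta>| / (1 - \<rho>)\<close>
  works as soon as \<open>\<rho> exp B \<le> (1 + \<rho>) / 2\<close>, and this holds for the parameter
  \<open>a(t) \<theta> / t \<rightarrow> 0\<close> once \<open>t\<close> is large.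
\<close>

lemma abs_exp_minus_one_le: "\<bar>exp (x::real) - 1\<bar> \<le> exp \<bar>x\<bar> - 1"
proof (cases "x \<ge> 0")
  case False
  have "1 - x \<le> exp (- x)"
    using exp_ge_add_one_self[of "- x"] by simp
  moreover have "1 + x \<le> exp x"
    by (rule exp_ge_add_one_self)
  moreover have "\<bar>exp x - 1\<bar> = 1 - exp x"
    using False by simp
  ultimately show ?thesis
    using False by linarith
qed simp

lemma exp_minus_one_le_mult_exp: "exp (x::real) - 1 \<le> x * exp x"
proof -
  have "(1 - x) * exp x \<le> exp (- x) * exp x"
    using exp_ge_add_one_self[of "- x"] by (intro mult_right_mono) simp_all
  also have "\<dots> = 1"
    by (simp add: exp_add[symmetric])
  finally show ?thesis
    by (simp add: algebra_simps)
qed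

lemma set_integral_nonneg:
  fixes f :: "'a \<Rightarrow> real"
  assumes "\<And>x. x \<in> A \<Longrightarrow> 0 \<le> f x"
  shows "0 \<le> (LINT x:A|M. f x)"
  unfolding set_lebesgue_integral_def
  using assms by (intro integral_nonneg_AE) (auto simp: indicator_def)

lemma set_integral_mono_set:
  fixes f :: "'a \<Rightarrow> real"
  assumes "A \<in> sets M" "A \<subseteq> B" "set_integrable M B f" "\<And>x. x \<in> B \<Longrightarrow> 0 \<le> f x"
  shows "(LINT x:A|M. f x) \<le> (LINT x:B|M. f x)"
proof -
  have "set_integrable M A f"
    using set_integrable_subset assms(1-3) by blast
  with assms show ?thesis
    unfolding set_integrable_def set_lebesgue_integral_def
    by (intro integral_mono) (auto simp: indicator_def)
qed

text \<open>No measurability of \<open>h\<close> is needed: a non-integrable product has integral \<open>0\<close>.\<close>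

lemma abs_set_integral_mult_le:
  fixes h g :: "'a \<Rightarrow> real"
  assumes A: "A \<in> sets M" "A \<subseteq> B"
    and g: "set_integrable M B g" "\<And>x. x \<in> B \<Longrightarrow> 0 \<le> g x"
    and h: "\<And>x. x \<in> A \<Longrightarrow> \<bar>h x\<bar> \<le> C" and C: "0 \<le> C"
  shows "\<bar>LINT x:A|M. h x * g x\<bar> \<le> C * (LINT x:B|M. g x)"
proof (cases "set_integrable M A (\<lambda>x. h x * g x)")
  case False
  then have "(LINT x:A|M. h x * g x) = 0"
    unfolding set_integrable_def set_lebesgue_integral_def
    by (simp add: not_integrable_integral_eq)
  then show ?thesis
    using g C set_integral_nonneg[of B g M] by simp
next
  case True
  have gA: "set_integrable M A g"
    using set_integrable_subset A g(1) by blast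
  have "\<bar>LINT x:A|M. h x * g x\<bar> \<le> (LINT x:A|M. \<bar>h x * g x\<bar>)"
    using set_integral_norm_bound[OF True] by simp
  also have "\<dots> \<le> (LINT x:A|M. C * g x)"
  proof (rule set_integral_mono)
    fix x assume x: "x \<in> A"
    then have "0 \<le> g x"
      using g(2) A(2) by auto
    then show "\<bar>h x * g x\<bar> \<le> C * g x"
      using h[OF x] by (simp add: abs_mult mult_right_mono)
  qed (use True gA set_integrable_abs in auto)
  also have "\<dots> = C * (LINT x:A|M. g x)"
    by simp
  also have "\<dots> \<le> C * (LINT x:B|M. g x)"
    using set_integral_mono_set[OF A g] C by (rule mult_left_mono)
  finally show ?thesis .
qed

lemma abs_Grec_le:
  fixes \<gamma> :: "nat \<Rightarrow> real \<Rightarrow> real"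
  assumes nonneg: "\<And>n t. t \<ge> 0 \<Longrightarrow> \<gamma> n t \<ge> 0"
    and integ: "\<And>n. set_integrable lborel {0..} (\<gamma> n)"
    and le_rho: "\<And>n. (LINT t:{0..}|lborel. \<gamma> n t) \<le> \<rho>"
    and B: "0 \<le> B" "\<bar>\<theta>\<bar> + (exp B - 1) * \<rho> \<le> B"
    and "0 \<le> t"
  shows "\<bar>Grec \<gamma> M k t \<theta>\<bar> \<le> B"
  using \<open>0 \<le> t\<close>
proof (induction k arbitrary: t)
  case 0
  have "0 \<le> \<rho>"
    using set_integral_nonneg[of "{0..}" "\<gamma> 0" lborel] nonneg le_rho[of 0] by fastforce
  then have "0 \<le> (exp B - 1) * \<rho>"
    using B(1) by simp
  then show ?case
    unfolding Grec.simps using B(2) by linarith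
next
  case (Suc k)
  have "\<bar>LINT s:{0..t}|lborel. (exp (Grec \<gamma> M k (t - s) \<theta>) - 1) * \<gamma> (M - Suc k) s\<bar>
          \<le> (exp B - 1) * (LINT s:{0..}|lborel. \<gamma> (M - Suc k) s)"
  proof (rule abs_set_integral_mult_le)
    fix s assume "s \<in> {0..t}"
    then have "\<bar>Grec \<gamma> M k (t - s) \<theta>\<bar> \<le> B"
      using Suc.IH by simp
    then show "\<bar>exp (Grec \<gamma> M k (t - s) \<theta>) - 1\<bar> \<le> exp B - 1"
      by (meson abs_exp_minus_one_le diff_right_mono exp_le_cancel_iff order_trans)
  qed (use integ nonneg B(1) in auto)
  also have "\<dots> \<le> (exp B - 1) * \<rho>"
    using le_rho B(1) by (intro mult_left_mono) simp_all
  finally have "\<bar>\<theta>\<bar> + \<bar>LINT s:{0..t}|lborel. (exp (Grec \<gamma> M k (t - s) \<theta>) - 1) * \<gamma> (M - Suc k) s\<bar> \<le> B"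
    using B(2) by linarith
  then show ?case
    unfolding Grec.simps by (rule order_trans[OF abs_triangle_ineq])
qed

lemma abs_plus_exp_minus_one_le:
  fixes \<rho> x :: real
  defines "B \<equiv> 2 / (1 - \<rho>) * \<bar>x\<bar>"
  assumes "0 \<le> \<rho>" "\<rho> < 1" "\<rho> * exp B \<le> (1 + \<rho>) / 2"
  shows "\<bar>x\<bar> + (exp B - 1) * \<rho> \<le> B"
proof -
  have "0 \<le> B"
    using assms(3) unfolding B_def by simp
  have "(exp B - 1) * \<rho> \<le> B * exp B * \<rho>"
    using exp_minus_one_le_mult_exp assms(2) by (rule mult_right_mono)
  also have "\<dots> \<le> B * ((1 + \<rho>) / 2)"
    using assms(4) \<open>0 \<le> B\<close> by (simp add: mult.assoc mult.left_commute mult_left_mono)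
  also have "\<bar>x\<bar> + B * ((1 + \<rho>) / 2) = B"
    using assms(3) unfolding B_def by (simp add: field_simps)
  finally show ?thesis
    by simp
qed

lemma abs_G_le:
  fixes \<gamma> :: "nat \<Rightarrow> real \<Rightarrow> real"
  assumes nonneg: "\<And>n t. t \<ge> 0 \<Longrightarrow> \<gamma> n t \<ge> 0"
    and integ: "\<And>n. set_integrable lborel {0..} (\<gamma> n)"
    and le_rho: "\<And>n. (LINT t:{0..}|lborel. \<gamma> n t) \<le> \<rho>"
    and \<rho>: "0 \<le> \<rho>" "\<rho> < 1"
    and small: "\<rho> * exp (2 / (1 - \<rho>) * \<bar>\<theta>\<bar>) \<le> (1 + \<rho>) / 2"
    and "0 \<le> s"
  shows "\<bar>G \<gamma> n s \<theta> M\<bar> \<le> 2 / (1 - \<rho>) * \<bar>\<theta>\<bar>"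
proof -
  have "0 \<le> 2 / (1 - \<rho>) * \<bar>\<theta>\<bar>"
    using \<rho>(2) by simp
  from abs_Grec_le[where \<gamma> = \<gamma>, OF nonneg integ le_rho this
      abs_plus_exp_minus_one_le[OF \<rho> small] \<open>0 \<le> s\<close>]
  show ?thesis
    unfolding G_def .
qed

theorem lemma4p7:
  fixes \<gamma> :: "nat \<Rightarrow> real \<Rightarrow> real" and a :: "real \<Rightarrow> real" and \<rho> \<theta> :: real
  assumes nonneg: "\<And>n t. t \<ge> 0 \<Longrightarrow> \<gamma> n t \<ge> 0"
    and integ: "\<And>n. set_integrable lborel {0..} (\<gamma> n)"
    and bdd: "bdd_above (range (\<lambda>n. LINT t:{0..}|lborel. \<gamma> n t))"
    and rho_def: "\<rho> = (SUP n. LINT t:{0..}|lborel. \<gamma> n t)"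
    and rho_lt: "\<rho> < 1"
    and a_pos: "\<And>t. a t > 0"
    and a_lim: "((\<lambda>t. a t / t) \<longlongrightarrow> 0) at_top"
  shows "\<exists>k1 \<ge> 1 / (1 - \<rho>). \<forall>\<^sub>F t in at_top. \<forall>M n s.
           1 \<le> n \<longrightarrow> n \<le> M \<longrightarrow> s \<ge> 0 \<longrightarrow>
           \<bar>G \<gamma> n s (a t / t * \<theta>) M\<bar> \<le> k1 * (a t / t) * \<bar>\<theta>\<bar>"
proof -
  define k1 where "k1 = 2 / (1 - \<rho>)"
  have le_rho: "(LINT t:{0..}|lborel. \<gamma> n t) \<le> \<rho>" for n
    unfolding rho_def by (rule cSUP_upper[OF _ bdd]) simp
  have "0 \<le> \<rho>"
    using set_integral_nonneg[of "{0..}" "\<gamma> 0" lborel] nonneg le_rho[of 0] by fastforce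
  have "((\<lambda>t. \<rho> * exp (k1 * \<bar>a t / t * \<theta>\<bar>)) \<longlongrightarrow> \<rho> * exp (k1 * \<bar>0 * \<theta>\<bar>)) at_top"
    by (intro tendsto_intros a_lim)
  moreover have "\<rho> * exp (k1 * \<bar>0 * \<theta>\<bar>) < (1 + \<rho>) / 2"
    using rho_lt by simp
  ultimately have "\<forall>\<^sub>F t in at_top. \<rho> * exp (k1 * \<bar>a t / t * \<theta>\<bar>) < (1 + \<rho>) / 2"
    by (rule order_tendstoD(2))
  moreover have "\<forall>\<^sub>F t in at_top. (t::real) > 0"
    by (rule eventually_gt_at_top)
  ultimately have bound: "\<forall>\<^sub>F t in at_top. \<forall>M n s.
      1 \<le> n \<longrightarrow> n \<le> M \<longrightarrow> s \<ge> 0 \<longrightarrow> \<bar>G \<gamma> n s (a t / t * \<theta>) M\<bar> \<le> k1 * (a t / t) * \<bar>\<theta>\<bar>"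
  proof eventually_elim
    case (elim t)
    have "k1 * \<bar>a t / t * \<theta>\<bar> = k1 * (a t / t) * \<bar>\<theta>\<bar>"
      using elim(2) a_pos[of t] by (simp add: abs_mult)
    then show ?case
      using abs_G_le[where \<gamma> = \<gamma>, OF nonneg integ le_rho \<open>0 \<le> \<rho>\<close> rho_lt
          less_imp_le[OF elim(1)[unfolded k1_def]]]
      unfolding k1_def by simp
  qed
  have "1 / (1 - \<rho>) \<le> k1"
    using rho_lt unfolding k1_def by (simp add: divide_right_mono)
  with bound show ?thesis
    by blast
qed

end
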